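(* Let $n>1$ and consider the undirected cycle $C_{2n}$ with vertices $v_1,\dots,v_n,w_1,\dots,w_n$, where $v_i$ is adjacent to $w_i$ and $w_{i-1}$ (indices of $w$ modulo $n$, so $v_1$ is adjacent to $w_1$ and $w_n$). Let $x_i,y_i\in[3]$ denote the hat colours of $v_i,w_i$, all arithmetic modulo $3$. Define guessing functions $f_i$ for $v_i$ and $g_i$ for $w_i$ by: for $i\ne1$, $f_i(y_{i-1},y_i)=y_i-1$ if $y_i\ne y_{i-1}+1$ and $f_i=y_i+1$ if $y_i=y_{i-1}+1$; $f_1(y_n,y_1)=y_1-1$ if $y_1\ne y_n-1$ and $f_1=y_1+1$ if $y_1=y_n-1$; for $i\ne n$, $g_i(x_i,x_{i+1})=x_i$ if $x_i\ne x_{i+1}+1$ and $g_i=x_i-1$ if $x_i=x_{i+1}+1$; $g_n(x_n,x_1)=x_n$ if $x_n\ne x_1$ and $g_n=x_n-1$ if $x_n=x_1$. Call a configuration $(x,y)\in[3]^n\times[3]^n$ bad if $f_i\ne x_i$ and $g_i\ne y_i$ for all $i$. Then: (a) if $n\equiv 0\pmod 3$ there is no bad configuration; in particular $C_{2n}$ is $3$-solvable; (b) if $n\equiv1\pmod3$ the bad configurations are exactly those with $x_i=y_i=a-(i-1)$ for all $i=1,\dots,n$, for some $a\in[3]$; (c) if $n\equiv2\pmod3$ the bad configurations are exactly those with $y_i=a+(i-1)$ and $x_i=a+(i-2)$ for all $i=1,\dots,n$, for some $a\in[3]$.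
   Context: An undirected graph is identified with the directed graph having both arcs for each edge; $N^-(v)$ is the set of neighbours of $v$. For $q\ge2$ let $[q]=\{0,\dots,q-1\}$. A $D$-function over $[q]$ is a map $f=(f_v)_{v\in V}:[q]^V\to[q]^V$ with each $f_v(x)$ depending only on $(x_u)_{u\in N^-(v)}$. $D$ is $q$-solvable if some $D$-function $f$ over $[q]$ has the property that for every $x\in[q]^V$ there is $v$ with $f_v(x)=x_v$. *)

theory Defs
  imports "HOL-Library.FuncSet"
begin

(* An undirected graph is given by its vertex set V and the
neighbourhood map N (N v = set of neighbours of v).*)

definition configs :: "'v set \<Rightarrow> nat \<Rightarrow> ('v \<Rightarrow> nat) set" where
  "configs V q = V \<rightarrow>\<^sub>E {..<q}"

definition is_D_function :: "'v set \<Rightarrow> ('v \<Rightarrow> 'v set) \<Rightarrow> nat \<Rightarrow> ('v \<Rightarrow> ('v \<Rightarrow> nat) \<Rightarrow> nat) \<Rightarrow> bool" where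
  "is_D_function V N q f \<longleftrightarrow>
     (\<forall>v\<in>V. \<forall>x\<in>configs V q. f v x < q) \<and>
     (\<forall>v\<in>V. \<forall>x\<in>configs V q. \<forall>x'\<in>configs V q.
        (\<forall>u\<in>N v. x u = x' u) \<longrightarrow> f v x = f v x')"

definition q_solvable :: "'v set \<Rightarrow> ('v \<Rightarrow> 'v set) \<Rightarrow> nat \<Rightarrow> bool" where
  "q_solvable V N q \<longleftrightarrow>
     (\<exists>f. is_D_function V N q f \<and> (\<forall>x\<in>configs V q. \<exists>v\<in>V. f v x = x v))"

(* The cycle C_{2n}: Inl i is v_i, Inr i is w_i (1 \<le> i \<le> n);
v_i ~ w_i, v_i ~ w_{i-1} (indices mod n), equivalently w_i ~ v_i, w_i ~ v_{i+1}.*)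

definition cycV :: "nat \<Rightarrow> (nat + nat) set" where
  "cycV n = Inl ` {1..n} \<union> Inr ` {1..n}"

definition cycN :: "nat \<Rightarrow> nat + nat \<Rightarrow> (nat + nat) set" where
  "cycN n u = (case u of
      Inl i \<Rightarrow> {Inr i, Inr (if i = 1 then n else i - 1)}
    | Inr i \<Rightarrow> {Inl i, Inl (if i = n then 1 else i + 1)})"

definition fguess :: "nat \<Rightarrow> (nat \<Rightarrow> int) \<Rightarrow> nat \<Rightarrow> int" where
  "fguess n y i =
     (if i = 1 then
        (if y 1 \<noteq> (y n - 1) mod 3 then (y 1 - 1) mod 3 else (y 1 + 1) mod 3)
      else
        (if y i \<noteq> (y (i - 1) + 1) mod 3 then (y i - 1) mod 3 else (y i + 1) mod 3))"

definition gguess :: "nat \<Rightarrow> (nat \<Rightarrow> int) \<Rightarrow> nat \<Rightarrow> int" where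
  "gguess n x i =
     (if i = n then
        (if x n \<noteq> x 1 then x n else (x n - 1) mod 3)
      else
        (if x i \<noteq> (x (i + 1) + 1) mod 3 then x i else (x i - 1) mod 3))"

definition bad :: "nat \<Rightarrow> (nat \<Rightarrow> int) \<Rightarrow> (nat \<Rightarrow> int) \<Rightarrow> bool" where
  "bad n x y \<longleftrightarrow> (\<forall>i\<in>{1..n}. fguess n y i \<noteq> x i \<and> gguess n x i \<noteq> y i)"

definition colouring :: "nat \<Rightarrow> (nat \<Rightarrow> int) \<Rightarrow> bool" where
  "colouring n x \<longleftrightarrow> (\<forall>i\<in>{1..n}. x i \<in> {0, 1, 2})"

end

theory Submission
  imports Defs
begin

text \<open>Write \<open>e_i = (x_i - y_i) mod 3\<close>. The two guesses across an edge \<open>w_i v_(i+1)\<close>, and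
  across the closing edge \<open>w_n v_1\<close>, can both fail only if \<open>e\<close> does not increase along the
  edge, so \<open>e\<close> is constant around the cycle. For constant \<open>e\<close> a failing edge forces
  \<open>y_(i+1) = y_i + e - 1\<close> and the closing edge forces \<open>y_1 = y_n + e\<close>; going once around
  the cycle gives \<open>n (1 - e) = 1 (mod 3)\<close>, which is impossible for \<open>n = 0 (mod 3)\<close> and
  forces \<open>e = 0\<close> for \<open>n = 1\<close> and \<open>e = 2\<close> for \<open>n = 2 (mod 3)\<close>. Conversely every such
  progression is bad.\<close>

lemma inner_edge_misses_residues:
  fixes x x' y y' :: int
  assumes "x \<in> {0,1,2}" "x' \<in> {0,1,2}" "y \<in> {0,1,2}" "y' \<in> {0,1,2}"
    and "(if x \<noteq> (x' + 1) mod 3 then x else (x - 1) mod 3) \<noteq> y"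
    and "(if y' \<noteq> (y + 1) mod 3 then (y' - 1) mod 3 else (y' + 1) mod 3) \<noteq> x'"
  shows "(x' - y') mod 3 \<le> (x - y) mod 3"
    and "(x' - y') mod 3 = (x - y) mod 3 \<Longrightarrow> y' = (y + (x - y) mod 3 - 1) mod 3"
  by (use assms in \<open>elim insertE emptyE; simp\<close>)+

lemma closing_edge_misses_residues:
  fixes x x' y y' :: int
  assumes "x \<in> {0,1,2}" "x' \<in> {0,1,2}" "y \<in> {0,1,2}" "y' \<in> {0,1,2}"
    and "(if x \<noteq> x' then x else (x - 1) mod 3) \<noteq> y"
    and "(if y' \<noteq> (y - 1) mod 3 then (y' - 1) mod 3 else (y' + 1) mod 3) \<noteq> x'"
  shows "(x' - y') mod 3 \<le> (x - y) mod 3"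
    and "(x' - y') mod 3 = (x - y) mod 3 \<Longrightarrow> y' = (y + (x - y) mod 3) mod 3"
  by (use assms in \<open>elim insertE emptyE; simp\<close>)+

lemma inner_edge_misses_if_progression:
  fixes x x' y y' e :: int
  assumes "y \<in> {0,1,2}" "e \<in> {0,1,2}"
    and "y' = (y + e - 1) mod 3" "x = (y + e) mod 3" "x' = (y' + e) mod 3"
  shows "(if x \<noteq> (x' + 1) mod 3 then x else (x - 1) mod 3) \<noteq> y"
    and "(if y' \<noteq> (y + 1) mod 3 then (y' - 1) mod 3 else (y' + 1) mod 3) \<noteq> x'"
  unfolding assms(5,4) assms(3) by (use assms(1,2) in \<open>elim insertE emptyE; simp\<close>)+

lemma closing_edge_misses_if_progression:
  fixes x x' y y' e :: int
  assumes "y \<in> {0,1,2}" "e \<in> {0,1,2}"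
    and "y' = (y + e) mod 3" "x = (y + e) mod 3" "x' = (y' + e) mod 3"
  shows "(if x \<noteq> x' then x else (x - 1) mod 3) \<noteq> y"
    and "(if y' \<noteq> (y - 1) mod 3 then (y' - 1) mod 3 else (y' + 1) mod 3) \<noteq> x'"
  unfolding assms(5,4) assms(3) by (use assms(1,2) in \<open>elim insertE emptyE; simp\<close>)+

lemma antitone_path_le:
  fixes r :: "nat \<Rightarrow> 'a::order"
  assumes step: "\<And>i. 1 \<le> i \<Longrightarrow> i < n \<Longrightarrow> r (Suc i) \<le> r i"
    and "1 \<le> i" "i \<le> j" "j \<le> n"
  shows "r j \<le> r i"
  using assms(3,4)
proof (induction j rule: dec_induct)
  case (step m)
  have "r (Suc m) \<le> r m" using assms(1) \<open>1 \<le> i\<close> step by simp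
  also have "r m \<le> r i" using step by simp
  finally show ?case .
qed simp

lemma antitone_cycle_const:
  fixes r :: "nat \<Rightarrow> 'a::order"
  assumes step: "\<And>i. 1 \<le> i \<Longrightarrow> i < n \<Longrightarrow> r (Suc i) \<le> r i"
    and closing: "r 1 \<le> r n" and i: "i \<in> {1..n}"
  shows "r i = r 1"
proof (rule antisym)
  show "r i \<le> r 1" by (rule antitone_path_le[of n r, OF step]) (use i in auto)
  have "r n \<le> r i" by (rule antitone_path_le[of n r, OF step]) (use i in auto)
  with closing show "r 1 \<le> r i" by order
qed

lemma mod_progression:
  fixes x :: "nat \<Rightarrow> int"
  assumes "\<And>i. 1 \<le> i \<Longrightarrow> i < n \<Longrightarrow> x (Suc i) = (x i + s) mod m"
    and "x 1 = a mod m" and "i \<in> {1..n}"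
  shows "x i = (a + (int i - 1) * s) mod m"
proof -
  have "1 \<le> i" "i \<le> n" using assms(3) by auto
  then show ?thesis
  proof (induction i rule: dec_induct)
    case (step k)
    then have "k < n" by simp
    have "x (Suc k) = (x k + s) mod m" using assms(1) step.hyps \<open>k < n\<close> by simp
    also have "\<dots> = ((a + (int k - 1) * s) mod m + s) mod m" using step.IH \<open>k < n\<close> by simp
    also have "\<dots> = (a + (int (Suc k) - 1) * s) mod m" by (simp add: mod_simps algebra_simps)
    finally show ?case .
  qed (use assms(2) in simp)
qed

lemma gguess_inner:
  "i < n \<Longrightarrow> gguess n x i = (if x i \<noteq> (x (Suc i) + 1) mod 3 then x i else (x i - 1) mod 3)"
  by (simp add: gguess_def)

lemma gguess_last: "gguess n x n = (if x n \<noteq> x 1 then x n else (x n - 1) mod 3)"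
  by (simp add: gguess_def)

lemma fguess_Suc:
  "1 \<le> i \<Longrightarrow> fguess n y (Suc i) =
     (if y (Suc i) \<noteq> (y i + 1) mod 3 then (y (Suc i) - 1) mod 3 else (y (Suc i) + 1) mod 3)"
  by (simp add: fguess_def)

lemma fguess_first:
  "fguess n y 1 = (if y 1 \<noteq> (y n - 1) mod 3 then (y 1 - 1) mod 3 else (y 1 + 1) mod 3)"
  by (simp add: fguess_def)

lemma bad_iff_edges_miss:
  assumes "n > 1"
  shows "bad n x y \<longleftrightarrow>
           (\<forall>i\<in>{1..<n}. gguess n x i \<noteq> y i \<and> fguess n y (Suc i) \<noteq> x (Suc i))
           \<and> gguess n x n \<noteq> y n \<and> fguess n y 1 \<noteq> x 1"
    (is "_ \<longleftrightarrow> ?inner \<and> ?closing")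
proof
  assume "bad n x y"
  then have miss: "fguess n y i \<noteq> x i" "gguess n x i \<noteq> y i" if "i \<in> {1..n}" for i
    using that by (simp_all add: bad_def)
  have "?inner"
  proof
    fix i assume "i \<in> {1..<n}"
    then have "i \<in> {1..n}" "Suc i \<in> {1..n}" by auto
    then show "gguess n x i \<noteq> y i \<and> fguess n y (Suc i) \<noteq> x (Suc i)" using miss by blast
  qed
  moreover have "1 \<in> {1..n}" "n \<in> {1..n}" using assms by auto
  ultimately show "?inner \<and> ?closing" using miss by blast
next
  assume edges: "?inner \<and> ?closing"
  show "bad n x y" unfolding bad_def
  proof
    fix i assume i: "i \<in> {1..n}"
    have "fguess n y i \<noteq> x i"
    proof (cases "i = 1")
      case False
      then obtain k where "i = Suc k" "k \<in> {1..<n}" using i by (cases i) auto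
      then show ?thesis using edges by blast
    qed (use edges in simp)
    moreover have "gguess n x i \<noteq> y i"
    proof (cases "i = n")
      case False
      then have "i \<in> {1..<n}" using i by auto
      then show ?thesis using edges by blast
    qed (use edges in simp)
    ultimately show "fguess n y i \<noteq> x i \<and> gguess n x i \<noteq> y i" ..
  qed
qed

definition progression :: "nat \<Rightarrow> int \<Rightarrow> int \<Rightarrow> (nat \<Rightarrow> int) \<Rightarrow> (nat \<Rightarrow> int) \<Rightarrow> bool" where
  "progression n a e x y \<longleftrightarrow>
     (\<forall>i\<in>{1..n}. y i = (a + (int i - 1) * (e - 1)) mod 3 \<and> x i = (y i + e) mod 3)"

lemma mod3_cases: "(u::int) mod 3 \<in> {0,1,2}"
  by simp presburger

lemma add_mod3_eq_iff: "(a + k) mod 3 = a mod 3 \<longleftrightarrow> (1 - k) mod 3 = (1::int)"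
  by presburger

lemma colouringD: "colouring n x \<Longrightarrow> i \<in> {1..n} \<Longrightarrow> x i \<in> {0,1,2}"
  by (simp add: colouring_def)

lemma progression_wraps_around_iff:
  assumes y: "\<forall>i\<in>{1..n}. y i = (a + (int i - 1) * (e - 1)) mod 3" and n: "n \<ge> 1"
  shows "y 1 = (y n + e) mod 3 \<longleftrightarrow> (int n * (1 - e)) mod 3 = 1"
proof -
  have y1: "y 1 = a mod 3" and yn: "y n = (a + (int n - 1) * (e - 1)) mod 3" using y n by auto
  have "(y n + e) mod 3 = (a + (int n - 1) * (e - 1) + e) mod 3"
    unfolding yn by (rule mod_add_left_eq)
  also have "\<dots> = (a + (int n * (e - 1) + 1)) mod 3" by (simp add: algebra_simps)
  finally have "y 1 = (y n + e) mod 3 \<longleftrightarrow> (a + (int n * (e - 1) + 1)) mod 3 = a mod 3"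
    unfolding y1 by auto
  also have "\<dots> \<longleftrightarrow> (int n * (1 - e)) mod 3 = 1"
    unfolding add_mod3_eq_iff by (simp add: algebra_simps)
  finally show ?thesis .
qed

lemma bad_inner_edge:
  assumes "colouring n x" "colouring n y" "bad n x y" "1 \<le> i" "i < n"
  shows "(x (Suc i) - y (Suc i)) mod 3 \<le> (x i - y i) mod 3"
    and "(x (Suc i) - y (Suc i)) mod 3 = (x i - y i) mod 3 \<Longrightarrow>
           y (Suc i) = (y i + (x i - y i) mod 3 - 1) mod 3"
proof -
  have ranges: "x i \<in> {0,1,2}" "x (Suc i) \<in> {0,1,2}" "y i \<in> {0,1,2}" "y (Suc i) \<in> {0,1,2}"
    using assms colouringD by simp_all
  have "gguess n x i \<noteq> y i" "fguess n y (Suc i) \<noteq> x (Suc i)"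
    using assms bad_iff_edges_miss[of n x y] by auto
  then have "(if x i \<noteq> (x (Suc i) + 1) mod 3 then x i else (x i - 1) mod 3) \<noteq> y i"
    "(if y (Suc i) \<noteq> (y i + 1) mod 3 then (y (Suc i) - 1) mod 3 else (y (Suc i) + 1) mod 3)
       \<noteq> x (Suc i)"
    using assms(4,5) by (simp_all add: gguess_inner fguess_Suc)
  from inner_edge_misses_residues[OF ranges this]
  show "(x (Suc i) - y (Suc i)) mod 3 \<le> (x i - y i) mod 3"
    "(x (Suc i) - y (Suc i)) mod 3 = (x i - y i) mod 3 \<Longrightarrow>
       y (Suc i) = (y i + (x i - y i) mod 3 - 1) mod 3" .
qed

lemma bad_closing_edge:
  assumes "n > 1" "colouring n x" "colouring n y" "bad n x y"
  shows "(x 1 - y 1) mod 3 \<le> (x n - y n) mod 3"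
    and "(x 1 - y 1) mod 3 = (x n - y n) mod 3 \<Longrightarrow> y 1 = (y n + (x n - y n) mod 3) mod 3"
proof -
  have ranges: "x n \<in> {0,1,2}" "x 1 \<in> {0,1,2}" "y n \<in> {0,1,2}" "y 1 \<in> {0,1,2}"
    using assms colouringD by simp_all
  have "gguess n x n \<noteq> y n" "fguess n y 1 \<noteq> x 1"
    using assms bad_iff_edges_miss[of n x y] by auto
  then have "(if x n \<noteq> x 1 then x n else (x n - 1) mod 3) \<noteq> y n"
    "(if y 1 \<noteq> (y n - 1) mod 3 then (y 1 - 1) mod 3 else (y 1 + 1) mod 3) \<noteq> x 1"
    unfolding gguess_last fguess_first .
  from closing_edge_misses_residues[OF ranges this]
  show "(x 1 - y 1) mod 3 \<le> (x n - y n) mod 3"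
    "(x 1 - y 1) mod 3 = (x n - y n) mod 3 \<Longrightarrow> y 1 = (y n + (x n - y n) mod 3) mod 3" .
qed

lemma bad_imp_progression:
  assumes n: "n > 1" and cx: "colouring n x" and cy: "colouring n y" and bad: "bad n x y"
  shows "\<exists>a\<in>{0,1,2}. \<exists>e\<in>{0,1,2}. progression n a e x y \<and> (int n * (1 - e)) mod 3 = 1"
proof -
  define r where "r i = (x i - y i) mod 3" for i
  define e where "e = r 1"
  have step: "r (Suc i) \<le> r i" if "1 \<le> i" "i < n" for i
    unfolding r_def by (rule bad_inner_edge(1)[OF cx cy bad that])
  have closing: "r 1 \<le> r n"
    unfolding r_def by (rule bad_closing_edge(1)[OF assms])
  have r_const: "r i = e" if "i \<in> {1..n}" for i
    unfolding e_def by (rule antitone_cycle_const[of n r, OF step closing that])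
  have y_step: "y (Suc i) = (y i + (e - 1)) mod 3" if "1 \<le> i" "i < n" for i
    using bad_inner_edge(2)[OF cx cy bad that] r_const[of i] r_const[of "Suc i"] that
    by (simp add: r_def algebra_simps)
  have y1: "y 1 \<in> {0,1,2}" using colouringD[OF cy] n by simp
  then have "y 1 = y 1 mod 3" by auto
  then have y_prog: "\<forall>i\<in>{1..n}. y i = (y 1 + (int i - 1) * (e - 1)) mod 3"
    using mod_progression[of n y "e - 1" 3 "y 1", OF y_step] by blast
  have x_from_y: "x i = (y i + e) mod 3" if "i \<in> {1..n}" for i
  proof -
    have "(y i + e) mod 3 = (y i + (x i - y i)) mod 3"
      unfolding r_const[OF that, symmetric] r_def by (simp add: mod_add_right_eq)
    then show ?thesis using colouringD[OF cx that] by auto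
  qed
  have "y 1 = (y n + e) mod 3"
    using bad_closing_edge(2)[OF assms] r_const[of 1] r_const[of n] n by (simp add: r_def)
  then have "(int n * (1 - e)) mod 3 = 1"
    using progression_wraps_around_iff[OF y_prog] n by simp
  moreover have "e \<in> {0,1,2}" unfolding e_def r_def by (rule mod3_cases)
  moreover have "progression n (y 1) e x y"
    unfolding progression_def using y_prog x_from_y by blast
  ultimately show ?thesis using y1 by blast
qed

lemma progression_imp_bad:
  assumes n: "n > 1" and e: "e \<in> {0,1,2}" and prog: "progression n a e x y"
    and cong: "(int n * (1 - e)) mod 3 = 1"
  shows "bad n x y"
proof -
  have y_prog: "\<forall>i\<in>{1..n}. y i = (a + (int i - 1) * (e - 1)) mod 3"
    using prog by (simp add: progression_def)
  then have y: "y i = (a + (int i - 1) * (e - 1)) mod 3" if "i \<in> {1..n}" for i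
    using that by blast
  have x: "x i = (y i + e) mod 3" if "i \<in> {1..n}" for i
    using prog that by (simp add: progression_def)
  have y_range: "y i \<in> {0,1,2}" if "i \<in> {1..n}" for i
    unfolding y[OF that] by (rule mod3_cases)
  have inner: "gguess n x i \<noteq> y i \<and> fguess n y (Suc i) \<noteq> x (Suc i)" if "i \<in> {1..<n}" for i
  proof -
    have i: "i \<in> {1..n}" "Suc i \<in> {1..n}" "i < n" "1 \<le> i" using that by auto
    have "(y i + e - 1) mod 3 = (y i + (e - 1)) mod 3" by (simp add: algebra_simps)
    also have "\<dots> = (a + (int i - 1) * (e - 1) + (e - 1)) mod 3"
      unfolding y[OF i(1)] by (rule mod_add_left_eq)
    also have "\<dots> = y (Suc i)" unfolding y[OF i(2)] by (simp add: algebra_simps)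
    finally have "y (Suc i) = (y i + e - 1) mod 3" ..
    from inner_edge_misses_if_progression[OF y_range[OF i(1)] e this x[OF i(1)] x[OF i(2)]]
    show ?thesis unfolding gguess_inner[OF i(3)] fguess_Suc[OF i(4)] by blast
  qed
  have ends: "1 \<in> {1..n}" "n \<in> {1..n}" using n by auto
  have "y 1 = (y n + e) mod 3"
    using progression_wraps_around_iff[OF y_prog] n cong by simp
  from closing_edge_misses_if_progression[OF y_range[OF ends(2)] e this x[OF ends(2)] x[OF ends(1)]]
  have "gguess n x n \<noteq> y n \<and> fguess n y 1 \<noteq> x 1"
    unfolding gguess_last fguess_first by blast
  then show ?thesis using inner bad_iff_edges_miss[OF n] by blast
qed

lemma bad_iff_progression:
  assumes "n > 1" "colouring n x" "colouring n y"
  shows "bad n x y \<longleftrightarrow>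
           (\<exists>a\<in>{0,1,2}. \<exists>e\<in>{0,1,2}. progression n a e x y \<and> (int n * (1 - e)) mod 3 = 1)"
  using bad_imp_progression[OF assms] progression_imp_bad[OF assms(1)] by blast

lemma progression_congruence_iff:
  assumes "e \<in> {0::int,1,2}"
  shows "(int n * (1 - e)) mod 3 = 1 \<longleftrightarrow> (e = 0 \<and> n mod 3 = 1) \<or> (e = 2 \<and> n mod 3 = 2)"
proof -
  have "(int n * (1 - e)) mod 3 = (int (n mod 3) * (1 - e)) mod 3"
    by (simp add: zmod_int mod_mult_left_eq)
  moreover have "n mod 3 \<in> {0,1,2}" by auto
  ultimately show ?thesis using assms by auto
qed

lemma progression_0_iff:
  "progression n a 0 x y \<longleftrightarrow>
     (\<forall>i\<in>{1..n}. x i = (a - (int i - 1)) mod 3 \<and> y i = (a - (int i - 1)) mod 3)"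
  by (auto simp: progression_def algebra_simps)

lemma progression_2_iff:
  "progression n a 2 x y \<longleftrightarrow>
     (\<forall>i\<in>{1..n}. y i = (a + (int i - 1)) mod 3 \<and> x i = (a + (int i - 2)) mod 3)"
proof -
  have "((a + (int i - 1)) mod 3 + 2) mod 3 = (a + (int i - 2)) mod 3" for i
    by presburger
  then show ?thesis by (auto simp: progression_def)
qed

definition cycle_strategy :: "nat \<Rightarrow> nat + nat \<Rightarrow> (nat + nat \<Rightarrow> nat) \<Rightarrow> nat" where
  "cycle_strategy n v c = (case v of
      Inl i \<Rightarrow> nat (fguess n (\<lambda>j. int (c (Inr j))) i)
    | Inr i \<Rightarrow> nat (gguess n (\<lambda>j. int (c (Inl j))) i))"

lemma configs_cycV_range:
  assumes "c \<in> configs (cycV n) 3" "j \<in> {1..n}"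
  shows "c (Inl j) < 3" "c (Inr j) < 3"
  using assms unfolding configs_def cycV_def by (auto simp: PiE_iff)

lemma fguess_range: "0 \<le> fguess n y i \<and> fguess n y i < 3"
  by (simp add: fguess_def)

lemma gguess_range:
  assumes "0 \<le> x i" "x i < 3" "0 \<le> x n" "x n < 3"
  shows "0 \<le> gguess n x i \<and> gguess n x i < 3"
  using assms by (simp add: gguess_def)

lemma int_mem_012_if_less_3: "k < 3 \<Longrightarrow> int k \<in> {0,1,2}"
  by auto

lemma is_D_function_cycle_strategy:
  assumes "n \<ge> 1"
  shows "is_D_function (cycV n) (cycN n) 3 (cycle_strategy n)"
  unfolding is_D_function_def
proof (intro conjI ballI impI)
  fix v and c :: "nat + nat \<Rightarrow> nat"
  assume v: "v \<in> cycV n" and c: "c \<in> configs (cycV n) 3"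
  show "cycle_strategy n v c < 3"
  proof (cases v)
    case (Inl i)
    then show ?thesis using fguess_range by (simp add: cycle_strategy_def nat_less_iff)
  next
    case (Inr i)
    then have "i \<in> {1..n}" "n \<in> {1..n}" using v assms by (auto simp: cycV_def)
    then have "0 \<le> gguess n (\<lambda>j. int (c (Inl j))) i \<and> gguess n (\<lambda>j. int (c (Inl j))) i < 3"
      using configs_cycV_range[OF c] by (intro gguess_range) auto
    then show ?thesis using Inr by (simp add: cycle_strategy_def nat_less_iff)
  qed
next
  fix v and c c' :: "nat + nat \<Rightarrow> nat"
  assume agree: "\<forall>u\<in>cycN n v. c u = c' u"
  show "cycle_strategy n v c = cycle_strategy n v c'"
  proof (cases v)
    case (Inl i)
    then have "c (Inr i) = c' (Inr i)"
      "c (Inr (if i = 1 then n else i - 1)) = c' (Inr (if i = 1 then n else i - 1))"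
      using agree by (auto simp: cycN_def)
    then show ?thesis using Inl by (cases "i = 1") (simp_all add: cycle_strategy_def fguess_def)
  next
    case (Inr i)
    then have "c (Inl i) = c' (Inl i)"
      "c (Inl (if i = n then 1 else i + 1)) = c' (Inl (if i = n then 1 else i + 1))"
      using agree by (auto simp: cycN_def)
    then show ?thesis using Inr by (cases "i = n") (simp_all add: cycle_strategy_def gguess_def)
  qed
qed

lemma q_solvable_if_no_bad:
  assumes n: "n > 1" and no_bad: "\<forall>x y. colouring n x \<and> colouring n y \<longrightarrow> \<not> bad n x y"
  shows "q_solvable (cycV n) (cycN n) 3"
proof -
  have "\<exists>v\<in>cycV n. cycle_strategy n v c = c v" if c: "c \<in> configs (cycV n) 3" for c
  proof -
    define x where "x = (\<lambda>j. int (c (Inl j)))"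
    define y where "y = (\<lambda>j. int (c (Inr j)))"
    have "colouring n x" "colouring n y"
      unfolding colouring_def x_def y_def
      using configs_cycV_range[OF c] int_mem_012_if_less_3 by blast+
    then obtain i where i: "i \<in> {1..n}" and "fguess n y i = x i \<or> gguess n x i = y i"
      using no_bad unfolding bad_def by blast
    then have "cycle_strategy n (Inl i) c = c (Inl i) \<or> cycle_strategy n (Inr i) c = c (Inr i)"
      by (auto simp: cycle_strategy_def x_def y_def)
    moreover have "Inl i \<in> cycV n" "Inr i \<in> cycV n" using i by (auto simp: cycV_def)
    ultimately show ?thesis by blast
  qed
  moreover have "is_D_function (cycV n) (cycN n) 3 (cycle_strategy n)"
    using n by (intro is_D_function_cycle_strategy) simp
  ultimately show ?thesis unfolding q_solvable_def by blast
qed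

theorem theorem16:
  fixes n :: nat
  assumes "n > 1"
  shows "(n mod 3 = 0 \<longrightarrow>
            (\<forall>x y. colouring n x \<and> colouring n y \<longrightarrow> \<not> bad n x y) \<and>
            q_solvable (cycV n) (cycN n) 3)
       \<and> (n mod 3 = 1 \<longrightarrow>
            (\<forall>x y. colouring n x \<and> colouring n y \<longrightarrow>
               (bad n x y \<longleftrightarrow> (\<exists>a\<in>{0::int, 1, 2}. \<forall>i\<in>{1..n}.
                   x i = (a - (int i - 1)) mod 3 \<and> y i = (a - (int i - 1)) mod 3))))
       \<and> (n mod 3 = 2 \<longrightarrow>
            (\<forall>x y. colouring n x \<and> colouring n y \<longrightarrow>
               (bad n x y \<longleftrightarrow> (\<exists>a\<in>{0::int, 1, 2}. \<forall>i\<in>{1..n}.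
                   y i = (a + (int i - 1)) mod 3 \<and> x i = (a + (int i - 2)) mod 3))))"
proof -
  have "(n mod 3 = 0 \<longrightarrow> \<not> bad n x y)
        \<and> (n mod 3 = 1 \<longrightarrow> (bad n x y \<longleftrightarrow> (\<exists>a\<in>{0,1,2}. progression n a 0 x y)))
        \<and> (n mod 3 = 2 \<longrightarrow> (bad n x y \<longleftrightarrow> (\<exists>a\<in>{0,1,2}. progression n a 2 x y)))"
    if "colouring n x" "colouring n y" for x y
    using bad_iff_progression[OF assms that] progression_congruence_iff by auto
  then show ?thesis
    using q_solvable_if_no_bad[OF assms] by (simp add: progression_0_iff progression_2_iff)
qed

end
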